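(* Let $\mathbb{K}$ be a field of characteristic $0$ and $R=\mathbb{K}[\mathbf t,\mathbf x]=\mathbb{K}[t_1,\dots,t_d,x_1,\dots,x_{n-d}]$. Let $I\subseteq R$ be a primary ideal of dimension $d$, $P=\sqrt I$, where $\mathbf t$ is a set of $d$ variables algebraically independent in $R/I$ (independent variables) and $\mathbf x$ are the remaining (dependent) variables. Let $S=\mathbb{K}(\mathbf t)[\mathbf x]$ and $IS$ the extension of $I$ to $S$. (1) If $\{D_i\}_i\subseteq W_S$ is a set of Noetherian operators for $IS$, then any lift $\{N_i\}_i\subseteq W_R$ of $\{D_i\}_i$ is a set of Noetherian operators for $I$. (2) Conversely, if $\{N_i\}_i\subseteq W_R$ is a set of Noetherian operators for $I$ involving only the differentials $\partial_{\mathbf x}$ (and not $\partial_{\mathbf t}$), then their images $\{D_i\}_i\subseteq W_S$ form a set of Noetherian operators for $IS$.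
   Context: $W_R=R\langle\partial_{t_1},\dots,\partial_{t_d},\partial_{x_1},\dots,\partial_{x_{n-d}}\rangle$ is the Weyl algebra, and $W_S=S\otimes_R W_R$ the ring of differential operators with coefficients in $S$, both acting by multiplication and partial differentiation (written $D\bullet f$). For a ring $T\in\{R,S\}$ and an ideal $J\subseteq T$, a set $N\subseteq W_T$ is a set of Noetherian operators for $J$ if for all $f\in T$: $f\in J\iff D\bullet f\in\sqrt J$ for all $D\in N$. A lift of $D\in W_S$ is an element $uD\in W_R$ with $u\in\mathbb{K}[\mathbf t]\setminus\{0\}$ (such $u$ exists by clearing denominators); $W_R\hookrightarrow W_S$ is the natural inclusion. *)

theory Defs
  imports Main "HOL-Library.Poly_Mapping" "HOL-Computational_Algebra.Fraction_Field"
begin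

text \<open>Multivariate polynomials over 'k in the finitely many variables of type 'v
  (the n = CARD('v) variables t_1..t_d, x_1..x_(n-d)).\<close>
type_synonym ('v, 'k) mpoly = "('v \<Rightarrow>\<^sub>0 nat) \<Rightarrow>\<^sub>0 'k"

definition pd :: "'v \<Rightarrow> ('v, 'k::comm_ring_1) mpoly \<Rightarrow> ('v, 'k) mpoly" where
  "pd v p = sum (\<lambda>m::'v \<Rightarrow>\<^sub>0 nat. Poly_Mapping.single (m - Poly_Mapping.single v (1::nat))
                 (of_nat (Poly_Mapping.lookup m v) * Poly_Mapping.lookup p m)) (Poly_Mapping.keys p)"

definition emb :: "('v::linorder, 'k::idom) mpoly \<Rightarrow> ('v, 'k) mpoly fract" where
  "emb f = Fract f 1"

definition pdF :: "'v::linorder \<Rightarrow> ('v, 'k::idom) mpoly fract \<Rightarrow> ('v, 'k) mpoly fract" where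
  "pdF v F = (SOME G. \<exists>a b. b \<noteq> 0 \<and> F = Fract a b \<and>
                 G = Fract (pd v a * b - a * pd v b) (b * b))"

definition dpow :: "('v::{finite,linorder} \<Rightarrow> 'a \<Rightarrow> 'a) \<Rightarrow> ('v \<Rightarrow>\<^sub>0 nat) \<Rightarrow> 'a \<Rightarrow> 'a" where
  "dpow d \<alpha> f = foldr (\<lambda>v g. (d v ^^ Poly_Mapping.lookup \<alpha> v) g) (sorted_list_of_set (UNIV::'v set)) f"

text \<open>A differential operator is written in normal form  sum_alpha c_alpha d^alpha
  (coefficients on the left); it is stored as the finitely supported map alpha \<mapsto> c_alpha.
  Action D \<bullet> f.\<close>
definition act :: "('v::{finite,linorder} \<Rightarrow> 'a \<Rightarrow> 'a) \<Rightarrow> (('v \<Rightarrow>\<^sub>0 nat) \<Rightarrow>\<^sub>0 'a::comm_ring_1) \<Rightarrow> 'a \<Rightarrow> 'a" where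
  "act d D f = (\<Sum>\<alpha>\<in>Poly_Mapping.keys D. Poly_Mapping.lookup D \<alpha> * dpow d \<alpha> f)"

abbreviation actR :: "(('v::{finite,linorder} \<Rightarrow>\<^sub>0 nat) \<Rightarrow>\<^sub>0 ('v, 'k::idom) mpoly) \<Rightarrow> ('v, 'k) mpoly \<Rightarrow> ('v, 'k) mpoly" where
  "actR \<equiv> act pd"

abbreviation actS :: "(('v::{finite,linorder} \<Rightarrow>\<^sub>0 nat) \<Rightarrow>\<^sub>0 ('v, 'k::idom) mpoly fract) \<Rightarrow> ('v, 'k) mpoly fract \<Rightarrow> ('v, 'k) mpoly fract" where
  "actS \<equiv> act pdF"

definition ideal_in :: "'a::comm_ring_1 set \<Rightarrow> 'a set \<Rightarrow> bool" where
  "ideal_in A J \<longleftrightarrow> J \<subseteq> A \<and> 0 \<in> J \<and> (\<forall>a\<in>J. \<forall>b\<in>J. a + b \<in> J) \<and> (\<forall>r\<in>A. \<forall>a\<in>J. r * a \<in> J)"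

definition rad :: "'a::comm_ring_1 set \<Rightarrow> 'a set \<Rightarrow> 'a set" where
  "rad A J = {f\<in>A. \<exists>k. f ^ k \<in> J}"

definition prime_in :: "'a::comm_ring_1 set \<Rightarrow> 'a set \<Rightarrow> bool" where
  "prime_in A P \<longleftrightarrow> ideal_in A P \<and> P \<noteq> A \<and> (\<forall>a\<in>A. \<forall>b\<in>A. a * b \<in> P \<longrightarrow> a \<in> P \<or> b \<in> P)"

definition primary_in :: "'a::comm_ring_1 set \<Rightarrow> 'a set \<Rightarrow> bool" where
  "primary_in A J \<longleftrightarrow> ideal_in A J \<and> J \<noteq> A \<and>
     (\<forall>a\<in>A. \<forall>b\<in>A. a * b \<in> J \<longrightarrow> a \<in> J \<or> b \<in> rad A J)"

text \<open>Krull dimension of R/J (J an ideal of R = the whole type): J has dimension d iff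
  there is a strict chain of d+1 primes containing J, but no such chain of d+2 primes.\<close>
definition chain_above :: "'a::comm_ring_1 set \<Rightarrow> nat \<Rightarrow> bool" where
  "chain_above J k \<longleftrightarrow> (\<exists>Q :: nat \<Rightarrow> 'a set.
      (\<forall>i\<le>k. prime_in UNIV (Q i) \<and> J \<subseteq> Q i) \<and> (\<forall>i<k. Q i \<subset> Q (Suc i)))"

definition ideal_dim :: "'a::comm_ring_1 set \<Rightarrow> nat \<Rightarrow> bool" where
  "ideal_dim J d \<longleftrightarrow> chain_above J d \<and> \<not> chain_above J (Suc d)"

definition Kt :: "'v set \<Rightarrow> ('v, 'k::zero) mpoly set" where
  "Kt T = {p. \<forall>m\<in>Poly_Mapping.keys p. Poly_Mapping.keys m \<subseteq> T}"

definition alg_indep_mod :: "'v set \<Rightarrow> ('v, 'k::comm_ring_1) mpoly set \<Rightarrow> bool" where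
  "alg_indep_mod T J \<longleftrightarrow> (\<forall>p\<in>Kt T. p \<in> J \<longrightarrow> p = 0)"

text \<open>S = K(t)[x], realised inside the fraction field of R as R localised at K[t] - {0}.\<close>
definition Sring :: "'v::linorder set \<Rightarrow> ('v, 'k::idom) mpoly fract set" where
  "Sring T = {Fract f u | f u. u \<in> Kt T \<and> u \<noteq> 0}"

definition ext_ideal :: "'v::linorder set \<Rightarrow> ('v, 'k::idom) mpoly set \<Rightarrow> ('v, 'k) mpoly fract set" where
  "ext_ideal T I = \<Inter>{J. ideal_in (Sring T) J \<and> emb ` I \<subseteq> J}"

definition WS :: "'v::{finite,linorder} set \<Rightarrow> (('v \<Rightarrow>\<^sub>0 nat) \<Rightarrow>\<^sub>0 ('v, 'k::idom) mpoly fract) set" where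
  "WS T = {D. \<forall>\<alpha>. Poly_Mapping.lookup D \<alpha> \<in> Sring T}"

definition op_emb :: "(('v::{finite,linorder} \<Rightarrow>\<^sub>0 nat) \<Rightarrow>\<^sub>0 ('v, 'k::idom) mpoly)
    \<Rightarrow> (('v \<Rightarrow>\<^sub>0 nat) \<Rightarrow>\<^sub>0 ('v, 'k) mpoly fract)" where
  "op_emb N = Poly_Mapping.map emb N"

text \<open>Noetherian operators (W_R is the whole operator type).\<close>
definition noeth_R :: "('v::{finite,linorder}, 'k::idom) mpoly set
    \<Rightarrow> (('v \<Rightarrow>\<^sub>0 nat) \<Rightarrow>\<^sub>0 ('v, 'k) mpoly) set \<Rightarrow> bool" where
  "noeth_R J N \<longleftrightarrow> (\<forall>f. f \<in> J \<longleftrightarrow> (\<forall>D\<in>N. actR D f \<in> rad UNIV J))"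

definition noeth_S :: "'v::{finite,linorder} set \<Rightarrow> ('v, 'k::idom) mpoly fract set
    \<Rightarrow> (('v \<Rightarrow>\<^sub>0 nat) \<Rightarrow>\<^sub>0 ('v, 'k) mpoly fract) set \<Rightarrow> bool" where
  "noeth_S T J N \<longleftrightarrow> N \<subseteq> WS T \<and>
     (\<forall>f\<in>Sring T. f \<in> J \<longleftrightarrow> (\<forall>D\<in>N. actS D f \<in> rad (Sring T) J))"

definition is_lift :: "'v::{finite,linorder} set \<Rightarrow> (('v \<Rightarrow>\<^sub>0 nat) \<Rightarrow>\<^sub>0 ('v, 'k::idom) mpoly)
    \<Rightarrow> (('v \<Rightarrow>\<^sub>0 nat) \<Rightarrow>\<^sub>0 ('v, 'k) mpoly fract) \<Rightarrow> bool" where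
  "is_lift T N D \<longleftrightarrow> (\<exists>u\<in>Kt T. u \<noteq> 0 \<and> op_emb N = Poly_Mapping.map (\<lambda>c. emb u * c) D)"

definition only_dx :: "'v set \<Rightarrow> (('v \<Rightarrow>\<^sub>0 nat) \<Rightarrow>\<^sub>0 'a::zero) \<Rightarrow> bool" where
  "only_dx T N \<longleftrightarrow> (\<forall>\<alpha>\<in>Poly_Mapping.keys N. Poly_Mapping.keys \<alpha> \<inter> T = {})"

end

theory Submission imports Defs begin

text \<open>
  Because \<open>I\<close> is primary and no nonzero polynomial in \<open>t\<close> lies in \<open>I\<close>, no element of
  \<open>K[t] - {0}\<close> lies in \<open>\<surd>I\<close>, so multiplication by such a \<open>u\<close> is injective modulo \<open>I\<close>.
  Hence \<open>f/u \<in> IS \<longleftrightarrow> f \<in> I\<close> and \<open>f/u \<in> \<surd>(IS) \<longleftrightarrow> f \<in> \<surd>I\<close>. A lift \<open>N = uD\<close> satisfies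
  \<open>D \<bullet> f = (N \<bullet> f)/u\<close>, and an operator involving only \<open>\<partial>\<^sub>x\<close> commutes with division by
  \<open>u \<in> K[t]\<close>, i.e. \<open>N \<bullet> (f/u) = (N \<bullet> f)/u\<close>; in both directions the conditions on
  \<open>R\<close> and on \<open>S\<close> therefore translate into each other.
\<close>

abbreviation var_exp :: "'v \<Rightarrow> 'v \<Rightarrow>\<^sub>0 nat" where
  "var_exp v \<equiv> Poly_Mapping.single v 1"

lemma pd_eq_sum_superset:
  fixes p :: "('v, 'k::comm_ring_1) mpoly"
  assumes "finite A" "Poly_Mapping.keys p \<subseteq> A"
  shows "pd v p = (\<Sum>m\<in>A. Poly_Mapping.single (m - var_exp v)
                     (of_nat (Poly_Mapping.lookup m v) * Poly_Mapping.lookup p m))"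
  unfolding pd_def by (rule sum.mono_neutral_left) (use assms in \<open>auto simp: in_keys_iff\<close>)

lemma pd_zero [simp]: "pd v 0 = 0"
  by (simp add: pd_def)

lemma pd_add: "pd v (p + q) = pd v p + pd v (q :: ('v, 'k::comm_ring_1) mpoly)"
proof -
  let ?A = "Poly_Mapping.keys p \<union> Poly_Mapping.keys q"
  have "Poly_Mapping.keys (p + q) \<subseteq> ?A" by (rule keys_add)
  then show ?thesis
    by (subst (1 2 3) pd_eq_sum_superset[where A = ?A])
       (auto simp: lookup_add distrib_left single_add sum.distrib)
qed

lemma pd_sum: "pd v (sum f A) = (\<Sum>a\<in>A. pd v (f a :: ('v, 'k::comm_ring_1) mpoly))"
  by (induction A rule: infinite_finite_induct) (auto simp: pd_add)

lemma pd_single: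
  "pd v (Poly_Mapping.single m c :: ('v, 'k::comm_ring_1) mpoly)
     = Poly_Mapping.single (m - var_exp v) (of_nat (Poly_Mapping.lookup m v) * c)"
  by (subst pd_eq_sum_superset[where A = "{m}"]) auto

lemma mpoly_eq_sum_monomials:
  "p = (\<Sum>m\<in>Poly_Mapping.keys p. Poly_Mapping.single m (Poly_Mapping.lookup p m))"
  by (rule poly_mapping_eqI) (auto simp: lookup_sum lookup_single when_def in_keys_iff)

lemma single_add_minus_var_exp:
  "Poly_Mapping.single ((a + b) - var_exp v) (of_nat (Poly_Mapping.lookup a v) * c)
     = Poly_Mapping.single ((a - var_exp v) + b) (of_nat (Poly_Mapping.lookup a v) * c)"
proof (cases "Poly_Mapping.lookup a v = 0")
  case False
  then have "(a + b) - var_exp v = (a - var_exp v) + b"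
    by (intro poly_mapping_eqI) (auto simp: lookup_add lookup_minus lookup_single when_def)
  then show ?thesis by simp
qed simp

lemma pd_mult_single:
  "pd v (Poly_Mapping.single a c * Poly_Mapping.single b e :: ('v, 'k::comm_ring_1) mpoly)
     = pd v (Poly_Mapping.single a c) * Poly_Mapping.single b e
       + Poly_Mapping.single a c * pd v (Poly_Mapping.single b e)"
proof -
  let ?la = "of_nat (Poly_Mapping.lookup a v)" and ?lb = "of_nat (Poly_Mapping.lookup b v)"
  have "pd v (Poly_Mapping.single a c * Poly_Mapping.single b e)
      = Poly_Mapping.single ((a + b) - var_exp v) (?la * (c * e))
        + Poly_Mapping.single ((b + a) - var_exp v) (?lb * (c * e))"
    by (simp add: mult_single pd_single lookup_add algebra_simps single_add[symmetric])
  also have "\<dots> = Poly_Mapping.single ((a - var_exp v) + b) (?la * (c * e))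
        + Poly_Mapping.single ((b - var_exp v) + a) (?lb * (c * e))"
    by (simp only: single_add_minus_var_exp)
  finally show ?thesis
    by (simp add: mult_single pd_single algebra_simps)
qed

lemma pd_mult: "pd v (p * q) = pd v p * q + p * pd v (q :: ('v, 'k::comm_ring_1) mpoly)"
proof -
  let ?s = "\<lambda>p m. Poly_Mapping.single m (Poly_Mapping.lookup p m) :: ('v, 'k) mpoly"
  let ?P = "Poly_Mapping.keys p" and ?Q = "Poly_Mapping.keys q"
  have "p * q = (\<Sum>a\<in>?P. \<Sum>b\<in>?Q. ?s p a * ?s q b)"
    by (subst (1) mpoly_eq_sum_monomials[of p], subst (1) mpoly_eq_sum_monomials[of q])
       (simp add: sum_product)
  then have "pd v (p * q) = (\<Sum>a\<in>?P. \<Sum>b\<in>?Q. pd v (?s p a) * ?s q b + ?s p a * pd v (?s q b))"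
    by (simp add: pd_sum pd_mult_single)
  also have "\<dots> = (\<Sum>a\<in>?P. pd v (?s p a)) * (\<Sum>b\<in>?Q. ?s q b)
                 + (\<Sum>a\<in>?P. ?s p a) * (\<Sum>b\<in>?Q. pd v (?s q b))"
    by (simp add: sum.distrib sum_product)
  also have "\<dots> = pd v p * q + p * pd v q"
    by (simp add: pd_sum[symmetric] mpoly_eq_sum_monomials[symmetric])
  finally show ?thesis .
qed

lemma Kt_one: "1 \<in> Kt T"
  by (auto simp: Kt_def)

lemma Kt_mult:
  assumes "p \<in> Kt T" "q \<in> Kt T"
  shows "p * (q :: ('v, 'k::comm_ring_1) mpoly) \<in> Kt T"
  unfolding Kt_def
proof (intro CollectI ballI)
  fix m assume "m \<in> Poly_Mapping.keys (p * q)"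
  then obtain a b where "m = a + b" "a \<in> Poly_Mapping.keys p" "b \<in> Poly_Mapping.keys q"
    using keys_mult by blast
  then show "Poly_Mapping.keys m \<subseteq> T"
    using assms keys_add[of a b] unfolding Kt_def by blast
qed

lemma Kt_power: "(p :: ('v, 'k::comm_ring_1) mpoly) \<in> Kt T \<Longrightarrow> p ^ k \<in> Kt T"
  by (induction k) (auto simp: Kt_one Kt_mult)

lemma pd_eq_0_if_Kt:
  assumes "u \<in> Kt T" "v \<notin> T"
  shows "pd v u = 0"
proof -
  have "Poly_Mapping.lookup m v = 0" if "m \<in> Poly_Mapping.keys u" for m
    using assms that unfolding Kt_def by (auto simp flip: not_in_keys_iff_lookup_eq_zero)
  then show ?thesis unfolding pd_def by simp
qed

lemma pd_one [simp]: "pd v 1 = 0"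
  using pd_eq_0_if_Kt[OF Kt_one, of v "{}"] by simp

lemma emb_zero [simp]: "emb 0 = 0"
  by (simp add: emb_def fract_collapse)

lemma emb_eq_0_iff: "emb a = 0 \<longleftrightarrow> a = 0"
  by (simp add: emb_def Zero_fract_def eq_fract)

lemma emb_add: "emb (a + b) = emb a + emb b"
  by (simp add: emb_def)

lemma emb_mult: "emb (a * b) = emb a * emb b"
  by (simp add: emb_def)

lemma emb_sum: "emb (sum f A) = (\<Sum>a\<in>A. emb (f a))"
  by (induction A rule: infinite_finite_induct) (simp_all add: emb_add)

lemma Fract_eq_divide_emb: "Fract a u = emb a / emb u"
  by (cases "u = 0") (simp_all add: emb_def fract_collapse)

lemma Fract_in_Sring: "u \<in> Kt T \<Longrightarrow> u \<noteq> 0 \<Longrightarrow> Fract f u \<in> Sring T"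
  unfolding Sring_def by blast

lemma emb_in_Sring: "emb f \<in> Sring T"
  unfolding emb_def using Fract_in_Sring[OF Kt_one] by simp

text \<open>\<open>pdF\<close> applies the quotient rule to an arbitrary representation \<open>a'/b'\<close> of
  \<open>a/b\<close>; differentiating \<open>a b' = a' b\<close> by the product rule shows the result does not
  depend on that choice.\<close>
lemma quotient_rule_well_defined:
  fixes a b a' b' da db da' db' :: "'a::comm_ring"
  assumes eq: "a * b' = a' * b" and deriv_eq: "da * b' + a * db' = da' * b + a' * db"
  shows "(da' * b' - a' * db') * (b * b) = (da * b - a * db) * (b' * b')"
proof -
  have "(da * b - a * db) * (b' * b')
      = (da * b' + a * db') * (b * b') - (a * b') * (b * db') - (a * b') * (b' * db)"
    by (simp add: algebra_simps)
  also have "\<dots> = (da' * b + a' * db) * (b * b') - (a' * b) * (b * db') - (a' * b) * (b' * db)"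
    by (simp only: eq deriv_eq)
  also have "\<dots> = (da' * b' - a' * db') * (b * b)"
    by (simp add: algebra_simps)
  finally show ?thesis by simp
qed

lemma pdF_Fract:
  fixes a b :: "('v::linorder, 'k::idom) mpoly"
  assumes "b \<noteq> 0"
  shows "pdF v (Fract a b) = Fract (pd v a * b - a * pd v b) (b * b)"
proof -
  let ?P = "\<lambda>G. \<exists>a' b'. b' \<noteq> 0 \<and> Fract a b = Fract a' b'
                  \<and> G = Fract (pd v a' * b' - a' * pd v b') (b' * b')"
  have "?P (Fract (pd v a * b - a * pd v b) (b * b))" using assms by blast
  then have "?P (pdF v (Fract a b))" unfolding pdF_def by (rule someI)
  then obtain a' b' where b': "b' \<noteq> 0" "Fract a b = Fract a' b'"
    and G: "pdF v (Fract a b) = Fract (pd v a' * b' - a' * pd v b') (b' * b')" by blast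
  have eq: "a * b' = a' * b" using b' assms by (simp add: eq_fract)
  have deriv_eq: "pd v a * b' + a * pd v b' = pd v a' * b + a' * pd v b"
    using arg_cong[OF eq, of "pd v"] by (simp add: pd_mult)
  have nonzero: "b' * b' \<noteq> 0" "b * b \<noteq> 0" using b' assms by auto
  show ?thesis
    unfolding G eq_fract(1)[OF nonzero] by (rule quotient_rule_well_defined[OF eq deriv_eq])
qed

lemma pdF_emb: "pdF v (emb f) = emb (pd v f)"
  unfolding emb_def by (simp add: pdF_Fract)

lemma pdF_Fract_Kt:
  assumes "u \<in> Kt T" "u \<noteq> 0" "v \<notin> T"
  shows "pdF v (Fract f u) = Fract (pd v f) u"
proof -
  have "pdF v (Fract f u) = Fract (u * pd v f) (u * u)"
    using assms by (simp add: pdF_Fract pd_eq_0_if_Kt mult.commute)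
  also have "\<dots> = Fract (pd v f) u" using assms(2) by (rule mult_fract_cancel)
  finally show ?thesis .
qed

lemma funpow_commute:
  assumes "\<And>g. h (d g) = d' (h g)"
  shows "h ((d ^^ n) g) = (d' ^^ n) (h g)"
  by (induction n) (auto simp: assms)

lemma dpow_commute:
  assumes "\<And>v g. Poly_Mapping.lookup \<alpha> v \<noteq> 0 \<Longrightarrow> h (d v g) = d' v (h g)"
  shows "h (dpow d \<alpha> f) = dpow d' \<alpha> (h f)"
proof -
  have "h (foldr (\<lambda>v g. (d v ^^ Poly_Mapping.lookup \<alpha> v) g) vs f)
      = foldr (\<lambda>v g. (d' v ^^ Poly_Mapping.lookup \<alpha> v) g) vs (h f)" for vs
  proof (induction vs)
    case (Cons v vs)
    show ?case
    proof (cases "Poly_Mapping.lookup \<alpha> v = 0")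
      case False
      then have "h (d v g) = d' v (h g)" for g by (rule assms)
      then show ?thesis using Cons.IH by (simp add: funpow_commute)
    qed (simp add: Cons.IH)
  qed simp
  then show ?thesis unfolding dpow_def .
qed

lemma lookup_map:
  "g 0 = 0 \<Longrightarrow> Poly_Mapping.lookup (Poly_Mapping.map g p) k = g (Poly_Mapping.lookup p k)"
  by transfer (simp add: when_def)

lemma keys_map_subset: "Poly_Mapping.keys (Poly_Mapping.map g p) \<subseteq> Poly_Mapping.keys p"
  by transfer (auto simp: when_def)

lemma act_eq_sum_superset:
  assumes "finite A" "Poly_Mapping.keys D \<subseteq> A"
  shows "act d D f = (\<Sum>\<alpha>\<in>A. Poly_Mapping.lookup D \<alpha> * dpow d \<alpha> f)"
  unfolding act_def by (rule sum.mono_neutral_left) (use assms in \<open>auto simp: in_keys_iff\<close>)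

lemma act_map_mult: "act d (Poly_Mapping.map (\<lambda>x. c * x) D) f = c * act d D f"
  by (subst act_eq_sum_superset[OF _ keys_map_subset])
     (auto simp: lookup_map act_def sum_distrib_left mult.assoc)

lemma act_op_emb_emb: "actS (op_emb N) (emb f) = emb (actR N f)"
proof -
  have "dpow pdF \<alpha> (emb f) = emb (dpow pd \<alpha> f)" for \<alpha>
    by (rule dpow_commute[symmetric]) (simp add: pdF_emb)
  then show ?thesis
    unfolding op_emb_def
    by (subst act_eq_sum_superset[OF _ keys_map_subset])
       (simp_all add: lookup_map act_def emb_sum emb_mult)
qed

lemma act_op_emb_Fract_if_only_dx:
  assumes "only_dx T N" "u \<in> Kt T" "u \<noteq> 0"
  shows "actS (op_emb N) (Fract f u) = Fract (actR N f) u"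
proof -
  have "dpow pdF \<alpha> (Fract f u) = Fract (dpow pd \<alpha> f) u" if "\<alpha> \<in> Poly_Mapping.keys N" for \<alpha>
  proof (rule dpow_commute[symmetric])
    fix v g assume "Poly_Mapping.lookup \<alpha> v \<noteq> 0"
    then have "v \<in> Poly_Mapping.keys \<alpha>" by (simp add: in_keys_iff)
    then have "v \<notin> T" using assms(1) that unfolding only_dx_def by blast
    then show "Fract (pd v g) u = pdF v (Fract g u)" by (rule pdF_Fract_Kt[OF assms(2,3), symmetric])
  qed
  then have "actS (op_emb N) (Fract f u)
      = (\<Sum>\<alpha>\<in>Poly_Mapping.keys N. emb (Poly_Mapping.lookup N \<alpha> * dpow pd \<alpha> f) / emb u)"
    unfolding op_emb_def
    by (subst act_eq_sum_superset[OF _ keys_map_subset])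
       (simp_all add: lookup_map emb_mult Fract_eq_divide_emb)
  also have "\<dots> = emb (actR N f) / emb u"
    by (simp only: act_def emb_sum sum_divide_distrib)
  also have "\<dots> = Fract (actR N f) u"
    by (simp only: Fract_eq_divide_emb)
  finally show ?thesis .
qed

lemma op_emb_in_WS: "op_emb N \<in> WS T"
  unfolding WS_def op_emb_def
  by (simp add: lookup_map emb_in_Sring)

definition loc_ideal :: "'v::linorder set \<Rightarrow> ('v, 'k::idom) mpoly set \<Rightarrow> ('v, 'k) mpoly fract set" where
  "loc_ideal T I = {Fract g u | g u. g \<in> I \<and> u \<in> Kt T \<and> u \<noteq> 0}"

lemma ideal_in_loc_ideal:
  fixes I :: "('v::linorder, 'k::idom) mpoly set"
  assumes "ideal_in UNIV I"
  shows "ideal_in (Sring T) (loc_ideal T I)"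
proof -
  have I0: "0 \<in> I" and Iadd: "\<And>a b. a \<in> I \<Longrightarrow> b \<in> I \<Longrightarrow> a + b \<in> I"
    and Imult: "\<And>r a. a \<in> I \<Longrightarrow> r * a \<in> I" using assms unfolding ideal_in_def by auto
  have "Fract 0 1 \<in> loc_ideal T I"
    using I0 Kt_one[of T] unfolding loc_ideal_def by fastforce
  then have "0 \<in> loc_ideal T I" by (simp add: fract_collapse)
  moreover have "x + y \<in> loc_ideal T I" if x: "x \<in> loc_ideal T I" and y: "y \<in> loc_ideal T I" for x y
  proof -
    obtain g u where g: "x = Fract g u" "g \<in> I" "u \<in> Kt T" "u \<noteq> 0"
      using x unfolding loc_ideal_def by blast
    obtain g' u' where g': "y = Fract g' u'" "g' \<in> I" "u' \<in> Kt T" "u' \<noteq> 0"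
      using y unfolding loc_ideal_def by blast
    have "x + y = Fract (g * u' + g' * u) (u * u')" using g g' by simp
    moreover have "g * u' + g' * u \<in> I" using g g' Iadd Imult by (simp add: mult.commute)
    moreover have "u * u' \<in> Kt T" "u * u' \<noteq> 0" using g g' Kt_mult by auto
    ultimately show ?thesis unfolding loc_ideal_def by blast
  qed
  moreover have "r * x \<in> loc_ideal T I" if r: "r \<in> Sring T" and x: "x \<in> loc_ideal T I" for r x
  proof -
    obtain g u where g: "x = Fract g u" "g \<in> I" "u \<in> Kt T" "u \<noteq> 0"
      using x unfolding loc_ideal_def by blast
    obtain f w where f: "r = Fract f w" "w \<in> Kt T" "w \<noteq> 0"
      using r unfolding Sring_def by blast
    have "r * x = Fract (f * g) (w * u)" "f * g \<in> I" "w * u \<in> Kt T" "w * u \<noteq> 0"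
      using g f Imult Kt_mult by auto
    then show ?thesis unfolding loc_ideal_def by blast
  qed
  moreover have "loc_ideal T I \<subseteq> Sring T" unfolding loc_ideal_def Sring_def by blast
  ultimately show ?thesis unfolding ideal_in_def by blast
qed

lemma ext_ideal_eq_loc_ideal:
  fixes I :: "('v::linorder, 'k::idom) mpoly set"
  assumes "ideal_in UNIV I"
  shows "ext_ideal T I = loc_ideal T I"
proof
  have "emb ` I \<subseteq> loc_ideal T I" unfolding loc_ideal_def emb_def using Kt_one[of T] by fastforce
  then show "ext_ideal T I \<subseteq> loc_ideal T I"
    unfolding ext_ideal_def using ideal_in_loc_ideal[OF assms] by blast
next
  show "loc_ideal T I \<subseteq> ext_ideal T I" unfolding ext_ideal_def
  proof (intro Inter_greatest subsetI)
    fix J x assume J: "J \<in> {J. ideal_in (Sring T) J \<and> emb ` I \<subseteq> J}" and "x \<in> loc_ideal T I"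
    then obtain g u where "x = Fract 1 u * emb g" "g \<in> I" "u \<in> Kt T" "u \<noteq> 0"
      unfolding loc_ideal_def emb_def by auto
    with J show "x \<in> J" using Fract_in_Sring unfolding ideal_in_def by blast
  qed
qed

lemma primary_mult_Kt_cancel:
  fixes I :: "('v::linorder, 'k::idom) mpoly set"
  assumes "primary_in UNIV I" "alg_indep_mod T I" "u \<in> Kt T" "u \<noteq> 0" "f * u \<in> I"
  shows "f \<in> I"
proof (rule ccontr)
  assume "f \<notin> I"
  with assms obtain k where "u ^ k \<in> I" unfolding primary_in_def rad_def by blast
  moreover have "u ^ k \<in> Kt T" using assms(3) by (rule Kt_power)
  ultimately have "u ^ k = 0" using assms(2) unfolding alg_indep_mod_def by blast
  with assms(4) show False by simp
qed

lemma Fract_in_loc_ideal_iff: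
  fixes I :: "('v::linorder, 'k::idom) mpoly set"
  assumes I: "primary_in UNIV I" "alg_indep_mod T I" and u: "u \<in> Kt T" "u \<noteq> 0"
  shows "Fract f u \<in> loc_ideal T I \<longleftrightarrow> f \<in> I"
proof
  assume "Fract f u \<in> loc_ideal T I"
  then obtain g w where g: "Fract f u = Fract g w" "g \<in> I" "w \<in> Kt T" "w \<noteq> 0"
    unfolding loc_ideal_def by blast
  then have "f * w = g * u" using u by (simp add: eq_fract)
  moreover have "g * u \<in> I" using g I unfolding primary_in_def ideal_in_def by (metis mult.commute UNIV_I)
  ultimately show "f \<in> I" using primary_mult_Kt_cancel[OF I g(3,4)] by simp
qed (use u in \<open>auto simp: loc_ideal_def\<close>)

lemma Fract_in_rad_loc_ideal_iff:
  fixes I :: "('v::linorder, 'k::idom) mpoly set"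
  assumes I: "primary_in UNIV I" "alg_indep_mod T I" and u: "u \<in> Kt T" "u \<noteq> 0"
  shows "Fract f u \<in> rad (Sring T) (loc_ideal T I) \<longleftrightarrow> f \<in> rad UNIV I"
proof -
  have "Fract f u ^ k = Fract (f ^ k) (u ^ k)" for k
    by (induction k) (auto simp: fract_collapse)
  then have "Fract f u ^ k \<in> loc_ideal T I \<longleftrightarrow> f ^ k \<in> I" for k
    using Fract_in_loc_ideal_iff[OF I Kt_power[OF u(1)]] u(2) by simp
  then show ?thesis using Fract_in_Sring[OF u] unfolding rad_def by auto
qed

lemma noeth_R_if_lifts:
  fixes I :: "('v::{finite,linorder}, 'k::idom) mpoly set"
  assumes I: "primary_in UNIV I" "alg_indep_mod T I"
    and noeth: "noeth_S T (ext_ideal T I) (range Ds)" and lift: "\<And>i. is_lift T (Ns i) (Ds i)"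
  shows "noeth_R I (range Ns)"
  unfolding noeth_R_def
proof
  fix f
  have IS: "ext_ideal T I = loc_ideal T I"
    using I(1) ext_ideal_eq_loc_ideal unfolding primary_in_def by blast
  have "actS (Ds i) (emb f) \<in> rad (Sring T) (loc_ideal T I) \<longleftrightarrow> actR (Ns i) f \<in> rad UNIV I" for i
  proof -
    obtain u where u: "u \<in> Kt T" "u \<noteq> 0"
      and N: "op_emb (Ns i) = Poly_Mapping.map (\<lambda>c. emb u * c) (Ds i)"
      using lift unfolding is_lift_def by blast
    have "emb (actR (Ns i) f) = emb u * actS (Ds i) (emb f)"
      by (simp flip: act_op_emb_emb act_map_mult add: N)
    then have "actS (Ds i) (emb f) = Fract (actR (Ns i) f) u"
      using u(2) by (simp add: Fract_eq_divide_emb emb_eq_0_iff field_simps)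
    then show ?thesis using Fract_in_rad_loc_ideal_iff[OF I u] by simp
  qed
  moreover have "f \<in> I \<longleftrightarrow> emb f \<in> loc_ideal T I"
    using Fract_in_loc_ideal_iff[OF I Kt_one] by (simp add: emb_def)
  moreover have "emb f \<in> loc_ideal T I
      \<longleftrightarrow> (\<forall>i. actS (Ds i) (emb f) \<in> rad (Sring T) (loc_ideal T I))"
    using noeth emb_in_Sring unfolding noeth_S_def IS by blast
  ultimately show "f \<in> I \<longleftrightarrow> (\<forall>D\<in>range Ns. actR D f \<in> rad UNIV I)"
    by simp
qed

lemma noeth_S_if_only_dx:
  fixes I :: "('v::{finite,linorder}, 'k::idom) mpoly set"
  assumes I: "primary_in UNIV I" "alg_indep_mod T I"
    and noeth: "noeth_R I (range Ns)" and dx: "\<And>i. only_dx T (Ns i)"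
  shows "noeth_S T (ext_ideal T I) (range (\<lambda>i. op_emb (Ns i)))"
proof -
  have "F \<in> loc_ideal T I \<longleftrightarrow> (\<forall>i. actS (op_emb (Ns i)) F \<in> rad (Sring T) (loc_ideal T I))"
    if F_in: "F \<in> Sring T" for F
  proof -
    obtain f u where F: "F = Fract f u" and u: "u \<in> Kt T" "u \<noteq> 0"
      using F_in unfolding Sring_def by blast
    have "F \<in> loc_ideal T I \<longleftrightarrow> (\<forall>i. actR (Ns i) f \<in> rad UNIV I)"
      using Fract_in_loc_ideal_iff[OF I u] noeth unfolding F noeth_R_def by auto
    then show ?thesis
      using Fract_in_rad_loc_ideal_iff[OF I u] act_op_emb_Fract_if_only_dx[OF dx u] F by simp
  qed
  moreover have "ext_ideal T I = loc_ideal T I"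
    using I(1) ext_ideal_eq_loc_ideal unfolding primary_in_def by blast
  ultimately show ?thesis
    unfolding noeth_S_def using op_emb_in_WS by auto
qed

theorem proposition3p13:
  fixes I :: "('v::{finite,linorder}, 'k::field_char_0) mpoly set"
    and T :: "'v set" and d :: nat
  assumes T_card: "card T = d"
    and primary: "primary_in UNIV I"
    and dim: "ideal_dim I d"
    and indep: "alg_indep_mod T I"
  shows "(\<forall>(Ds :: 'i \<Rightarrow> (('v \<Rightarrow>\<^sub>0 nat) \<Rightarrow>\<^sub>0 ('v, 'k) mpoly fract))
            (Ns :: 'i \<Rightarrow> (('v \<Rightarrow>\<^sub>0 nat) \<Rightarrow>\<^sub>0 ('v, 'k) mpoly)).
            noeth_S T (ext_ideal T I) (range Ds) \<and> (\<forall>i. is_lift T (Ns i) (Ds i))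
            \<longrightarrow> noeth_R I (range Ns))
       \<and> (\<forall>(Ns :: 'j \<Rightarrow> (('v \<Rightarrow>\<^sub>0 nat) \<Rightarrow>\<^sub>0 ('v, 'k) mpoly)).
            noeth_R I (range Ns) \<and> (\<forall>i. only_dx T (Ns i))
            \<longrightarrow> noeth_S T (ext_ideal T I) (range (\<lambda>i. op_emb (Ns i))))"
  using noeth_R_if_lifts[OF primary indep] noeth_S_if_only_dx[OF primary indep] by blast

end
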